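(* Let $k<n<m<\phi(k)$. Then the value in $U_q^+(\mathfrak{so}_{2n})$ of the bracketed word $[y_k\,x_{n+1}\,x_{n+2}\cdots x_m]$, where $y_k=e[k,n]$, does not depend on the arrangement of the (skew) brackets on the sequence $y_k,x_{n+1},\dots,x_m$.
   Context: Let $\mathbf{k}$ be a field, $G$ an abelian group, $n\ge3$, $X=\{x_1,\dots,x_n\}$, $g_i\in G$, characters $\chi^i:G\to\mathbf{k}^*$, $p_{ij}=\chi^i(g_j)$; for homogeneous $u,v$, $p(u,v)=\chi^u(g_v)$ (replace $x_i$ by $g_i$, resp. $\chi^i$). $G\langle X\rangle$: skew group algebra with $x_ig=\chi^i(g)gx_i$; skew bracket $[u,v]=uv-p(u,v)vu$. Fix $q\in\mathbf{k}^*$, $q\ne-1$; assume $p_{ii}=q$ ($1\le i\le n$), $p_{i,i-1}p_{i-1,i}=q^{-1}$ ($1<i<n$), $p_{n-2,n}p_{n,n-2}=q^{-1}$, $p_{n-1,n}p_{n,n-1}=1$, $p_{ij}p_{ji}=1$ for all other $i<j$ with $j>i+1$. $U_q^+(\mathfrak{so}_{2n})$ is the quotient of $G\langle X\rangle$ by the ideal generated by $[x_i,[x_i,x_{i+1}]]$, $[[x_i,x_{i+1}],x_{i+1}]$ ($1\le i\le n-2$), $[x_{n-2},[x_{n-2},x_n]]$, $[[x_{n-2},x_n],x_n]$, $[x_i,x_j]$ ($1\le i<j\le n-1$, $j>i+1$), $[x_i,x_n]$ ($i\le n-3$), $[x_{n-1},x_n]$. For $n<i<2n$, $x_i:=x_{2n-i}$;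 $\phi(i)=2n-i$. For $k<n$, $e[k,n]$ is the left-normed bracketing $[[\dots[y_1,y_2],\dots],y_r]$ of the letters of the word $e(k,n)$, where $e(k,n)=x_kx_{k+1}\cdots x_{n-2}x_n$ (and $e(n-1,n)=x_n$, unbracketed). *)

theory Defs
  imports Main
begin

text \<open>The skew group algebra G<X>: elements are finitely supported functions
  from pairs (g, w) (g in G, w a word in the letters 1..n) to the field k;
  the basis element (g,w) stands for g x_{w1} ... x_{wr}.\<close>

type_synonym ('g, 'k) elt = "'g \<times> nat list \<Rightarrow> 'k"

definition supp :: "('g, 'k::zero) elt \<Rightarrow> ('g \<times> nat list) set" where
  "supp a = {z. a z \<noteq> 0}"

definition fsupp :: "('g, 'k::zero) elt \<Rightarrow> bool" where
  "fsupp a \<longleftrightarrow> finite (supp a)"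

definition gw :: "(nat \<Rightarrow> 'g::ab_group_add) \<Rightarrow> nat list \<Rightarrow> 'g" where
  "gw gs w = sum_list (map gs w)"

definition chiw :: "(nat \<Rightarrow> 'g \<Rightarrow> 'k::field) \<Rightarrow> nat list \<Rightarrow> 'g \<Rightarrow> 'k" where
  "chiw chi w h = prod_list (map (\<lambda>a. chi a h) w)"

definition pp :: "(nat \<Rightarrow> 'g \<Rightarrow> 'k::field) \<Rightarrow> (nat \<Rightarrow> 'g::ab_group_add) \<Rightarrow> nat list \<Rightarrow> nat list \<Rightarrow> 'k" where
  "pp chi gs u v = chiw chi u (gw gs v)"

definition addv :: "('g, 'k::field) elt \<Rightarrow> ('g, 'k) elt \<Rightarrow> ('g, 'k) elt" where
  "addv a b = (\<lambda>z. a z + b z)"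

definition subv :: "('g, 'k::field) elt \<Rightarrow> ('g, 'k) elt \<Rightarrow> ('g, 'k) elt" where
  "subv a b = (\<lambda>z. a z - b z)"

definition smul :: "'k::field \<Rightarrow> ('g, 'k) elt \<Rightarrow> ('g, 'k) elt" where
  "smul c a = (\<lambda>z. c * a z)"

text \<open>Multiplication in G<X>: (g u)(h v) = chi^u(h) (g h) u v, from x_i g = chi^i(g) g x_i.\<close>
definition mul :: "(nat \<Rightarrow> 'g \<Rightarrow> 'k::field) \<Rightarrow> ('g::ab_group_add, 'k) elt \<Rightarrow> ('g, 'k) elt \<Rightarrow> ('g, 'k) elt" where
  "mul chi a b = (\<lambda>z. \<Sum>pq\<in>supp a \<times> supp b.
     if fst (fst pq) + fst (snd pq) = fst z \<and> snd (fst pq) @ snd (snd pq) = snd z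
     then a (fst pq) * b (snd pq) * chiw chi (snd (fst pq)) (fst (snd pq)) else 0)"

definition X :: "nat \<Rightarrow> ('g::zero, 'k::field) elt" where
  "X i = (\<lambda>z. if z = (0, [i]) then 1 else 0)"

definition sbr :: "(nat \<Rightarrow> 'g \<Rightarrow> 'k::field) \<Rightarrow> 'k \<Rightarrow> ('g::ab_group_add, 'k) elt \<Rightarrow> ('g, 'k) elt \<Rightarrow> ('g, 'k) elt" where
  "sbr chi p a b = subv (mul chi a b) (smul p (mul chi b a))"

inductive_set ideal_gen :: "(nat \<Rightarrow> 'g \<Rightarrow> 'k::field) \<Rightarrow> ('g::ab_group_add, 'k) elt set \<Rightarrow> ('g, 'k) elt set"
  for chi S where
  gen: "a \<in> S \<Longrightarrow> a \<in> ideal_gen chi S"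
| zero: "(\<lambda>z. 0) \<in> ideal_gen chi S"
| add: "a \<in> ideal_gen chi S \<Longrightarrow> b \<in> ideal_gen chi S \<Longrightarrow> addv a b \<in> ideal_gen chi S"
| lmul: "a \<in> ideal_gen chi S \<Longrightarrow> fsupp c \<Longrightarrow> mul chi c a \<in> ideal_gen chi S"
| rmul: "a \<in> ideal_gen chi S \<Longrightarrow> fsupp c \<Longrightarrow> mul chi a c \<in> ideal_gen chi S"

text \<open>Bracketings: binary trees whose leaves are homogeneous atoms (element, degree word).\<close>
datatype 'a btree = Lf 'a | Nd "'a btree" "'a btree"

fun leaves :: "'a btree \<Rightarrow> 'a list" where
  "leaves (Lf a) = [a]"
| "leaves (Nd l r) = leaves l @ leaves r"

fun deg :: "('e \<times> nat list) btree \<Rightarrow> nat list" where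
  "deg (Lf a) = snd a"
| "deg (Nd l r) = deg l @ deg r"

fun ev :: "(nat \<Rightarrow> 'g \<Rightarrow> 'k::field) \<Rightarrow> (nat \<Rightarrow> 'g::ab_group_add)
           \<Rightarrow> (('g, 'k) elt \<times> nat list) btree \<Rightarrow> ('g, 'k) elt" where
  "ev chi gs (Lf a) = fst a"
| "ev chi gs (Nd l r) = sbr chi (pp chi gs (deg l) (deg r)) (ev chi gs l) (ev chi gs r)"

definition xa :: "nat \<Rightarrow> ('g::zero, 'k::field) elt \<times> nat list" where
  "xa i = (X i, [i])"

definition xl :: "nat \<Rightarrow> (('g::zero, 'k::field) elt \<times> nat list) btree" where
  "xl i = Lf (xa i)"

fun lnorm :: "'a list \<Rightarrow> 'a btree" where
  "lnorm [] = undefined"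
| "lnorm (a # as) = foldl (\<lambda>t b. Nd t (Lf b)) (Lf a) as"

definition rels :: "(nat \<Rightarrow> 'g \<Rightarrow> 'k::field) \<Rightarrow> (nat \<Rightarrow> 'g::ab_group_add) \<Rightarrow> nat \<Rightarrow> ('g, 'k) elt set" where
  "rels chi gs n =
     {ev chi gs (Nd (xl i) (Nd (xl i) (xl (i+1)))) | i. 1 \<le> i \<and> i \<le> n - 2}
   \<union> {ev chi gs (Nd (Nd (xl i) (xl (i+1))) (xl (i+1))) | i. 1 \<le> i \<and> i \<le> n - 2}
   \<union> {ev chi gs (Nd (xl (n-2)) (Nd (xl (n-2)) (xl n))),
      ev chi gs (Nd (Nd (xl (n-2)) (xl n)) (xl n))}
   \<union> {ev chi gs (Nd (xl i) (xl j)) | i j. 1 \<le> i \<and> i < j \<and> j \<le> n - 1 \<and> i + 1 < j}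
   \<union> {ev chi gs (Nd (xl i) (xl n)) | i. 1 \<le> i \<and> i \<le> n - 3}
   \<union> {ev chi gs (Nd (xl (n-1)) (xl n))}"

definition eqU :: "(nat \<Rightarrow> 'g \<Rightarrow> 'k::field) \<Rightarrow> (nat \<Rightarrow> 'g::ab_group_add) \<Rightarrow> nat \<Rightarrow> ('g, 'k) elt \<Rightarrow> ('g, 'k) elt \<Rightarrow> bool" where
  "eqU chi gs n a b \<longleftrightarrow> subv a b \<in> ideal_gen chi (rels chi gs n)"

definition ew :: "nat \<Rightarrow> nat \<Rightarrow> nat list" where
  "ew k n = [k..<n-1] @ [n]"

definition ebr :: "(nat \<Rightarrow> 'g \<Rightarrow> 'k::field) \<Rightarrow> (nat \<Rightarrow> 'g::ab_group_add) \<Rightarrow> nat \<Rightarrow> nat \<Rightarrow> ('g, 'k) elt" where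
  "ebr chi gs k n = ev chi gs (lnorm (map xa (ew k n)))"

definition so_params :: "(nat \<Rightarrow> 'g \<Rightarrow> 'k::field) \<Rightarrow> (nat \<Rightarrow> 'g::ab_group_add) \<Rightarrow> nat \<Rightarrow> 'k \<Rightarrow> bool" where
  "so_params chi gs n q \<longleftrightarrow>
     (\<forall>i\<in>{1..n}. \<forall>a b. chi i (a + b) = chi i a * chi i b) \<and>
     (\<forall>i\<in>{1..n}. \<forall>a. chi i a \<noteq> 0) \<and>
     (\<forall>i\<in>{1..n}. chi i (gs i) = q) \<and>
     (\<forall>i. 1 < i \<and> i < n \<longrightarrow> chi i (gs (i-1)) * chi (i-1) (gs i) = inverse q) \<and>
     chi (n-2) (gs n) * chi n (gs (n-2)) = inverse q \<and>
     chi (n-1) (gs n) * chi n (gs (n-1)) = 1 \<and>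
     (\<forall>i j. 1 \<le> i \<and> i < j \<and> j \<le> n \<and> i + 1 < j \<and> (i, j) \<noteq> (n-2, n) \<longrightarrow>
        chi i (gs j) * chi j (gs i) = 1)"

end

theory Submission
  imports Defs
begin

text \<open>
  In the skew group algebra the skew bracket satisfies a twisted Jacobi identity. Hence, if in a
  word any two letters that are not neighbours skew-commute modulo the relations, every
  bracketing of the word equals the left-normed one: rotating the last letter of the right
  factor outwards changes the value only by terms containing such a vanishing bracket.
  For the word \<open>y\<^sub>k x\<^bsub>n-1\<^esub> x\<^bsub>n-2\<^esub> \<dots> x\<^bsub>2n-m\<^esub>\<close> two letters \<open>x\<^sub>a, x\<^sub>b\<close> with \<open>|a - b| \<ge> 2\<close>
  commute by the defining relations, and \<open>y\<^sub>k = e[k,n]\<close> skew-commutes with every \<open>x\<^sub>b\<close>,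
  \<open>k < b \<le> n - 2\<close>: building \<open>e[k,n]\<close> along the chain \<open>k, k + 1, \<dots>, n - 2, n\<close> of the
  Dynkin diagram, the letter \<open>x\<^sub>b\<close> is absorbed by its two neighbours in the chain through
  the quantum Serre relations, which is where \<open>q \<noteq> -1\<close> enters.
\<close>

section \<open>Noncommutative polynomials and skew brackets\<close>

text \<open>They sit in
  \<open>G\<langle>X\<rangle>\<close> as the elements supported on the neutral group element (\<open>to_elt\<close> below), and all
  bracket computations are carried out on this side.\<close>

typedef 'k ncpoly = "UNIV :: (nat list \<Rightarrow> 'k) set" morphisms ncoeff Abs_ncpoly
  by auto

setup_lifting type_definition_ncpoly

lemma ncpoly_eqI: "(\<And>w. ncoeff a w = ncoeff b w) \<Longrightarrow> a = b"
  by (metis ncoeff_inject ext)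

definition splits :: "nat list \<Rightarrow> (nat list \<times> nat list) set" where
  "splits w = {(u, v). u @ v = w}"

lemma splits_eq_image: "splits w = (\<lambda>i. (take i w, drop i w)) ` {..length w}"
  unfolding splits_def
proof safe
  fix u v assume "w = u @ v"
  then show "(u, v) \<in> (\<lambda>i. (take i (u @ v), drop i (u @ v))) ` {..length (u @ v)}"
    by (intro image_eqI[where x = "length u"]) auto
qed auto

lemma finite_splits [simp]: "finite (splits w)"
  unfolding splits_eq_image by simp

definition splits3 :: "nat list \<Rightarrow> (nat list \<times> nat list \<times> nat list) set" where
  "splits3 w = {(u, v, x). u @ v @ x = w}"

lemma sum_splits_splits_left:
  "(\<Sum>(x, v)\<in>splits w. \<Sum>(u, u')\<in>splits x. F u u' v) = (\<Sum>(u, u', v)\<in>splits3 w. F u u' v)"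
proof -
  have "(\<Sum>(x, v)\<in>splits w. \<Sum>(u, u')\<in>splits x. F u u' v)
      = (\<Sum>xv\<in>splits w. \<Sum>uu\<in>splits (fst xv). F (fst uu) (snd uu) (snd xv))"
    by (simp add: case_prod_beta)
  also have "\<dots> = (\<Sum>p\<in>Sigma (splits w) (\<lambda>xv. splits (fst xv)). F (fst (snd p)) (snd (snd p)) (snd (fst p)))"
    by (subst sum.Sigma) (auto simp: case_prod_beta)
  also have "\<dots> = (\<Sum>(u, u', v)\<in>splits3 w. F u u' v)"
    by (rule sum.reindex_bij_witness[where i = "\<lambda>(u, u', v). ((u @ u', v), (u, u'))"
          and j = "\<lambda>p. (fst (snd p), snd (snd p), snd (fst p))"])
       (auto simp: splits3_def splits_def)
  finally show ?thesis .
qed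

lemma sum_splits_splits_right:
  "(\<Sum>(u, y)\<in>splits w. \<Sum>(u', v)\<in>splits y. F u u' v) = (\<Sum>(u, u', v)\<in>splits3 w. F u u' v)"
proof -
  have "(\<Sum>(u, y)\<in>splits w. \<Sum>(u', v)\<in>splits y. F u u' v)
      = (\<Sum>xv\<in>splits w. \<Sum>uu\<in>splits (snd xv). F (fst xv) (fst uu) (snd uu))"
    by (simp add: case_prod_beta)
  also have "\<dots> = (\<Sum>p\<in>Sigma (splits w) (\<lambda>xv. splits (snd xv)). F (fst (fst p)) (fst (snd p)) (snd (snd p)))"
    by (subst sum.Sigma) (auto simp: case_prod_beta)
  also have "\<dots> = (\<Sum>(u, u', v)\<in>splits3 w. F u u' v)"
    by (rule sum.reindex_bij_witness[where i = "\<lambda>(u, u', v). ((u, u' @ v), (u', v))"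
          and j = "\<lambda>p. (fst (fst p), fst (snd p), snd (snd p))"])
       (auto simp: splits3_def splits_def)
  finally show ?thesis .
qed

lemma sum_splits_Nil_left:
  "(\<Sum>(u, v)\<in>splits w. (if u = [] then 1 else 0) * f u v) = (f [] w :: 'a::comm_ring_1)"
proof -
  have "(\<Sum>(u, v)\<in>splits w. (if u = [] then 1 else 0) * f u v)
      = (\<Sum>(u, v)\<in>{([], w)}. (if u = [] then 1 else 0) * f u v)"
    by (rule sum.mono_neutral_right) (simp, auto simp: splits_def split: if_splits)
  then show ?thesis by simp
qed

lemma sum_splits_Nil_right:
  "(\<Sum>(u, v)\<in>splits w. f u v * (if v = [] then 1 else 0)) = (f w [] :: 'a::comm_ring_1)"
proof -
  have "(\<Sum>(u, v)\<in>splits w. f u v * (if v = [] then 1 else 0))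
      = (\<Sum>(u, v)\<in>{(w, [])}. f u v * (if v = [] then 1 else 0))"
    by (rule sum.mono_neutral_right) (simp, auto simp: splits_def split: if_splits)
  then show ?thesis by simp
qed

instantiation ncpoly :: (comm_ring_1) ring_1
begin

lift_definition zero_ncpoly :: "'a ncpoly" is "\<lambda>w. 0" .
lift_definition one_ncpoly :: "'a ncpoly" is "\<lambda>w. if w = [] then 1 else 0" .
lift_definition plus_ncpoly :: "'a ncpoly \<Rightarrow> 'a ncpoly \<Rightarrow> 'a ncpoly"
  is "\<lambda>a b w. a w + b w" .
lift_definition minus_ncpoly :: "'a ncpoly \<Rightarrow> 'a ncpoly \<Rightarrow> 'a ncpoly"
  is "\<lambda>a b w. a w - b w" .
lift_definition uminus_ncpoly :: "'a ncpoly \<Rightarrow> 'a ncpoly" is "\<lambda>a w. - a w" .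
lift_definition times_ncpoly :: "'a ncpoly \<Rightarrow> 'a ncpoly \<Rightarrow> 'a ncpoly"
  is "\<lambda>a b w. \<Sum>(u, v)\<in>splits w. a u * b v" .

lemma ncoeff_0 [simp]: "ncoeff 0 w = 0"
  and ncoeff_1: "ncoeff 1 w = (if w = [] then 1 else 0)"
  and ncoeff_add [simp]: "ncoeff (a + b) w = ncoeff a w + ncoeff b w"
  and ncoeff_diff [simp]: "ncoeff (a - b) w = ncoeff a w - ncoeff b w"
  and ncoeff_minus [simp]: "ncoeff (- a) w = - ncoeff a w"
  and ncoeff_mult: "ncoeff (a * b) w = (\<Sum>(u, v)\<in>splits w. ncoeff a u * ncoeff b v)"
  by (simp_all add: zero_ncpoly.rep_eq one_ncpoly.rep_eq plus_ncpoly.rep_eq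
      minus_ncpoly.rep_eq uminus_ncpoly.rep_eq times_ncpoly.rep_eq)

instance
proof
  fix a b c :: "'a ncpoly"
  show "a * b * c = a * (b * c)"
  proof (rule ncpoly_eqI)
    fix w
    have "ncoeff (a * b * c) w
        = (\<Sum>(x, v)\<in>splits w. \<Sum>(u, u')\<in>splits x. ncoeff a u * ncoeff b u' * ncoeff c v)"
      by (simp add: ncoeff_mult sum_distrib_right case_prod_beta)
    also have "\<dots> = (\<Sum>(u, y)\<in>splits w. \<Sum>(u', v)\<in>splits y. ncoeff a u * ncoeff b u' * ncoeff c v)"
      unfolding sum_splits_splits_left sum_splits_splits_right ..
    also have "\<dots> = ncoeff (a * (b * c)) w"
      by (simp add: ncoeff_mult sum_distrib_left case_prod_beta mult.assoc)
    finally show "ncoeff (a * b * c) w = ncoeff (a * (b * c)) w" .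
  qed
  show "1 * a = a" "a * 1 = a"
    by (rule ncpoly_eqI, simp add: ncoeff_mult ncoeff_1 sum_splits_Nil_left sum_splits_Nil_right)+
  show "(a + b) * c = a * c + b * c" "a * (b + c) = a * b + a * c"
    by (rule ncpoly_eqI, simp add: ncoeff_mult algebra_simps sum.distrib case_prod_beta)+
  show "a + b + c = a + (b + c)" "a + b = b + a" "0 + a = a" "- a + a = 0" "a - b = a + - b"
    by (rule ncpoly_eqI, simp)+
  show "(0::'a ncpoly) \<noteq> 1"
    by (metis ncoeff_0 ncoeff_1 zero_neq_one)
qed

end

lift_definition smult :: "'k::comm_ring_1 \<Rightarrow> 'k ncpoly \<Rightarrow> 'k ncpoly" is "\<lambda>c a w. c * a w" .

lemma ncoeff_smult [simp]: "ncoeff (smult c a) w = c * ncoeff a w"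
  by (simp add: smult.rep_eq)

lemma smult_mult_left [simp]: "smult c a * b = smult c (a * b)"
  by (rule ncpoly_eqI) (simp add: ncoeff_mult sum_distrib_left case_prod_beta mult.assoc)

lemma smult_mult_right [simp]: "a * smult c b = smult c (a * b)"
  by (rule ncpoly_eqI) (simp add: ncoeff_mult sum_distrib_left case_prod_beta mult.left_commute)

lemma smult_smult [simp]: "smult c (smult d a) = smult (c * d) a"
  and smult_one [simp]: "smult 1 a = a"
  and smult_zero [simp]: "smult 0 a = 0" "smult c 0 = 0"
  and smult_add_right: "smult c (a + b) = smult c a + smult c b"
  and smult_diff_right: "smult c (a - b) = smult c a - smult c b"
  and smult_minus_right: "smult c (- a) = - smult c a"
  and smult_add_left: "smult (c + d) a = smult c a + smult d a"
  and smult_minus_left: "smult (- c) a = - smult c a"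
  by (rule ncpoly_eqI, simp add: algebra_simps)+

lemmas smult_distribs = smult_add_right smult_diff_right smult_minus_right

definition skew_br :: "'k::comm_ring_1 \<Rightarrow> 'k ncpoly \<Rightarrow> 'k ncpoly \<Rightarrow> 'k ncpoly" where
  "skew_br p a b = a * b - smult p (b * a)"

lemma skew_br_jacobi:
  "skew_br (pac * pbc) (skew_br pab a b) c
   = skew_br (pab * pac) a (skew_br pbc b c)
     - smult pab (b * skew_br pac a c) + smult pbc (skew_br pac a c * b)"
  by (simp add: skew_br_def algebra_simps smult_distribs)

lemma skew_br_mult_right:
  "skew_br (pab * pac) a (b * c) = skew_br pab a b * c + smult pab (b * skew_br pac a c)"
  by (simp add: skew_br_def algebra_simps smult_distribs)

lemma skew_br_swap: "p * p' = 1 \<Longrightarrow> skew_br p a b = smult (- p) (skew_br p' b a)"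
  by (simp add: skew_br_def algebra_simps smult_distribs smult_minus_left)

lemma skew_br_smult_right: "skew_br p a (smult c b) = smult c (skew_br p a b)"
  by (simp add: skew_br_def algebra_simps smult_distribs)

lemma skew_br_diff_left: "skew_br p a b - skew_br p a' b = skew_br p (a - a') b"
  and skew_br_diff_right: "skew_br p a b - skew_br p a b' = skew_br p a (b - b')"
  by (simp_all add: skew_br_def algebra_simps smult_distribs)

definition nsupp :: "'k::comm_ring_1 ncpoly \<Rightarrow> nat list set" where
  "nsupp a = {w. ncoeff a w \<noteq> 0}"

definition ncpolys :: "nat \<Rightarrow> 'k::comm_ring_1 ncpoly set" where
  "ncpolys n = {a. finite (nsupp a) \<and> (\<forall>w\<in>nsupp a. set w \<subseteq> {1..n})}"

lemma ncpolys_subsupp: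
  assumes "a \<in> ncpolys n" "b \<in> ncpolys n" "nsupp c \<subseteq> nsupp a \<union> nsupp b"
  shows "c \<in> ncpolys n"
proof -
  have "finite (nsupp c)"
    using assms(3) by (rule finite_subset) (use assms(1,2) in \<open>simp add: ncpolys_def\<close>)
  then show ?thesis using assms unfolding ncpolys_def by blast
qed

lemma ncpolys_add [intro]: "a \<in> ncpolys n \<Longrightarrow> b \<in> ncpolys n \<Longrightarrow> a + b \<in> ncpolys n"
  by (erule ncpolys_subsupp) (auto simp: nsupp_def)

lemma ncpolys_diff [intro]: "a \<in> ncpolys n \<Longrightarrow> b \<in> ncpolys n \<Longrightarrow> a - b \<in> ncpolys n"
  by (erule ncpolys_subsupp) (auto simp: nsupp_def)

lemma ncpolys_smult [intro]: "a \<in> ncpolys n \<Longrightarrow> smult c a \<in> ncpolys n"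
proof -
  assume a: "a \<in> ncpolys n"
  have "nsupp (smult c a) \<subseteq> nsupp a \<union> nsupp a" by (auto simp: nsupp_def)
  then show ?thesis by (rule ncpolys_subsupp[OF a a])
qed

lemma nsupp_mult: "nsupp (a * b) \<subseteq> (\<lambda>(u, v). u @ v) ` (nsupp a \<times> nsupp b)"
proof
  fix w assume "w \<in> nsupp (a * b)"
  then have "(\<Sum>(u, v)\<in>splits w. ncoeff a u * ncoeff b v) \<noteq> 0"
    by (simp add: nsupp_def ncoeff_mult)
  then obtain u v where "(u, v) \<in> splits w" "ncoeff a u * ncoeff b v \<noteq> 0"
    by (auto elim: sum.not_neutral_contains_not_neutral)
  then show "w \<in> (\<lambda>(u, v). u @ v) ` (nsupp a \<times> nsupp b)"
    by (force simp: splits_def nsupp_def)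
qed

lemma ncpolys_mult [intro]: "a \<in> ncpolys n \<Longrightarrow> b \<in> ncpolys n \<Longrightarrow> a * b \<in> ncpolys n"
  unfolding ncpolys_def
proof safe
  assume a: "finite (nsupp a)" "\<forall>w\<in>nsupp a. set w \<subseteq> {1..n}"
     and b: "finite (nsupp b)" "\<forall>w\<in>nsupp b. set w \<subseteq> {1..n}"
  show "finite (nsupp (a * b))"
    using nsupp_mult by (rule finite_subset) (use a b in simp)
  fix w x assume "w \<in> nsupp (a * b)" "x \<in> set w"
  then show "x \<in> {1..n}" using nsupp_mult[of a b] a b by fastforce
qed

lemma ncpolys_skew_br [intro]: "a \<in> ncpolys n \<Longrightarrow> b \<in> ncpolys n \<Longrightarrow> skew_br p a b \<in> ncpolys n"
  unfolding skew_br_def by auto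

lift_definition monom :: "nat list \<Rightarrow> 'k::comm_ring_1 ncpoly" is "\<lambda>w0 w. if w = w0 then 1 else 0" .

lemma ncoeff_monom: "ncoeff (monom w0) w = (if w = w0 then 1 else 0)"
  by (simp add: monom.rep_eq)

lemma ncpolys_monom [intro]: "set w \<subseteq> {1..n} \<Longrightarrow> monom w \<in> ncpolys n"
proof -
  have "nsupp (monom w) \<subseteq> {w}" by (simp add: nsupp_def ncoeff_monom)
  then show "set w \<subseteq> {1..n} \<Longrightarrow> monom w \<in> ncpolys n"
    unfolding ncpolys_def by (auto dest: finite_subset)
qed

lemma ncpolys_one [intro]: "(1 :: 'k::comm_ring_1 ncpoly) \<in> ncpolys n"
proof -
  have one: "(1::'k ncpoly) = monom []" by (rule ncpoly_eqI) (simp add: ncoeff_1 ncoeff_monom)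
  show ?thesis unfolding one by (rule ncpolys_monom) simp
qed

lemma ncpolys_zero [intro]: "0 \<in> ncpolys n"
  by (simp add: ncpolys_def nsupp_def)

definition to_elt :: "'k::comm_ring_1 ncpoly \<Rightarrow> ('g::zero, 'k) elt" where
  "to_elt a = (\<lambda>(g, w). if g = 0 then ncoeff a w else 0)"

definition of_elt :: "('g::zero, 'k::comm_ring_1) elt \<Rightarrow> 'k ncpoly" where
  "of_elt e = Abs_ncpoly (\<lambda>w. e (0, w))"

lemma of_elt_to_elt [simp]: "of_elt (to_elt a) = a"
  by (rule ncpoly_eqI) (simp add: of_elt_def to_elt_def Abs_ncpoly_inverse)

lemma to_elt_add: "to_elt (a + b) = addv (to_elt a) (to_elt b)"
  and to_elt_diff: "to_elt (a - b) = subv (to_elt a) (to_elt b)"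
  and to_elt_smult: "to_elt (smult c a) = smul c (to_elt a)"
  and to_elt_zero: "to_elt 0 = (\<lambda>z. 0)"
  and to_elt_monom: "to_elt (monom [i]) = X i"
  by (auto simp: to_elt_def addv_def subv_def smul_def X_def ncoeff_monom)

lemma supp_to_elt: "supp (to_elt a) = (\<lambda>w. (0, w)) ` nsupp a"
  by (auto simp: supp_def to_elt_def nsupp_def split: if_splits)

lemma fsupp_to_elt: "a \<in> ncpolys n \<Longrightarrow> fsupp (to_elt a)"
  by (simp add: fsupp_def supp_to_elt ncpolys_def)

lemma chiw_zero: "(\<forall>i\<in>set w. chi i 0 = 1) \<Longrightarrow> chiw chi w 0 = 1"
  by (induction w) (auto simp: chiw_def)

text \<open>Elements supported on the neutral group element multiply as in the free algebra,
  because characters are trivial on the neutral element.\<close>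
lemma mul_to_elt:
  fixes chi :: "nat \<Rightarrow> 'g::ab_group_add \<Rightarrow> 'k::field"
  assumes a: "a \<in> ncpolys n" and b: "b \<in> ncpolys n" and chi0: "\<forall>i\<in>{1..n}. chi i 0 = 1"
  shows "mul chi (to_elt a) (to_elt b) = (to_elt (a * b) :: ('g, 'k) elt)"
proof
  fix z :: "'g \<times> nat list"
  obtain g w where z: "z = (g, w)" by force
  have fin: "finite (nsupp a \<times> nsupp b)" using a b by (simp add: ncpolys_def)
  have inj: "inj_on (\<lambda>(u, v). ((0::'g, u), (0::'g, v))) (nsupp a \<times> nsupp b)"
    by (auto simp: inj_on_def)
  have img: "supp (to_elt a :: ('g, 'k) elt) \<times> supp (to_elt b :: ('g, 'k) elt)
      = (\<lambda>(u, v). ((0::'g, u), (0::'g, v))) ` (nsupp a \<times> nsupp b)"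
    by (auto simp: supp_to_elt)
  have chi_u: "chiw chi u 0 = 1" if "u \<in> nsupp a" for u
    using a chi0 that unfolding ncpolys_def by (intro chiw_zero) blast
  have "mul chi (to_elt a) (to_elt b) z = (\<Sum>(u, v)\<in>nsupp a \<times> nsupp b.
      if g = 0 \<and> (u, v) \<in> splits w then ncoeff a u * ncoeff b v else 0)"
    unfolding mul_def z img
    by (subst sum.reindex[OF inj]) (auto simp: to_elt_def splits_def chi_u intro!: sum.cong)
  also have "\<dots> = (if g = 0 then \<Sum>(u, v)\<in>(nsupp a \<times> nsupp b) \<inter> splits w. ncoeff a u * ncoeff b v else 0)"
    using fin by (simp add: sum.inter_restrict case_prod_beta if_distrib)
  also have "\<dots> = to_elt (a * b) z"
    by (auto simp: z to_elt_def ncoeff_mult nsupp_def intro!: sum.mono_neutral_left)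
  finally show "mul chi (to_elt a) (to_elt b) z = to_elt (a * b) z" .
qed

lemma leaves_ne: "leaves t \<noteq> []"
  by (induction t) auto

lemma deg_eq_concat_leaves: "deg t = concat (map snd (leaves t))"
  by (induction t) auto

lemma set_btree_eq_leaves: "set_btree t = set (leaves t)"
  by (induction t) auto

lemma leaves_map_btree: "leaves (map_btree f t) = map f (leaves t)"
  by (induction t) auto

lemma deg_map_btree_fst: "deg (map_btree (\<lambda>(e, d). (f e, d)) t) = deg t"
  by (induction t) (auto simp: case_prod_beta)

lemma lnorm_snoc: "xs \<noteq> [] \<Longrightarrow> lnorm (xs @ [v]) = Nd (lnorm xs) (Lf v)"
  by (cases xs) auto

lemma leaves_lnorm: "xs \<noteq> [] \<Longrightarrow> leaves (lnorm xs) = xs"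
proof -
  have "leaves (foldl (\<lambda>t b. Nd t (Lf b)) t0 as) = leaves t0 @ as" for t0 :: "'a btree" and as
    by (induction as arbitrary: t0) auto
  then show "xs \<noteq> [] \<Longrightarrow> leaves (lnorm xs) = xs" by (cases xs) auto
qed

lemma map_btree_lnorm: "xs \<noteq> [] \<Longrightarrow> map_btree f (lnorm xs) = lnorm (map f xs)"
proof (induction xs rule: rev_induct)
  case (snoc x xs)
  then show ?case by (cases "xs = []") (auto simp: lnorm_snoc)
qed simp

lemma deg_lnorm: "xs \<noteq> [] \<Longrightarrow> deg (lnorm xs) = concat (map snd xs)"
  by (simp add: deg_eq_concat_leaves leaves_lnorm)

abbreviation xgen :: "nat \<Rightarrow> 'k::comm_ring_1 ncpoly" where
  "xgen i \<equiv> monom [i]"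

definition atom :: "nat \<Rightarrow> 'k::comm_ring_1 ncpoly \<times> nat list" where
  "atom i = (xgen i, [i])"

lemma fst_atom [simp]: "fst (atom i) = xgen i"
  and snd_atom [simp]: "snd (atom i) = [i]"
  by (simp_all add: atom_def)

lemma concat_map_snd_atom [simp]: "concat (map (snd \<circ> atom) xs) = xs"
  by (induction xs) simp_all

abbreviation atom_to_elt :: "'k::comm_ring_1 ncpoly \<times> nat list \<Rightarrow> ('g::zero, 'k) elt \<times> nat list" where
  "atom_to_elt \<equiv> \<lambda>(e, d). (to_elt e, d)"

lemma xa_eq_atom_to_elt: "xa i = atom_to_elt (atom i)"
  by (simp add: xa_def atom_def to_elt_monom)

fun evP :: "(nat \<Rightarrow> 'g \<Rightarrow> 'k::field) \<Rightarrow> (nat \<Rightarrow> 'g::ab_group_add)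
           \<Rightarrow> ('k ncpoly \<times> nat list) btree \<Rightarrow> 'k ncpoly" where
  "evP chi gs (Lf a) = fst a"
| "evP chi gs (Nd l r) = skew_br (pp chi gs (deg l) (deg r)) (evP chi gs l) (evP chi gs r)"

definition admissible :: "nat \<Rightarrow> ('k::comm_ring_1 ncpoly \<times> nat list) list \<Rightarrow> bool" where
  "admissible n L \<longleftrightarrow> (\<forall>x\<in>set L. fst x \<in> ncpolys n \<and> set (snd x) \<subseteq> {1..n})"

lemma admissible_append [simp]: "admissible n (xs @ ys) \<longleftrightarrow> admissible n xs \<and> admissible n ys"
  by (auto simp: admissible_def)

lemma admissible_atoms: "set xs \<subseteq> {1..n} \<Longrightarrow> admissible n (map atom xs)"
  by (auto simp: admissible_def atom_def intro!: ncpolys_monom)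

lemma evP_ncpolys: "admissible n (leaves t) \<Longrightarrow> evP chi gs t \<in> ncpolys n"
  by (induction t) (auto simp: admissible_def)

section \<open>The ideal of defining relations\<close>

locale so_setting =
  fixes chi :: "nat \<Rightarrow> 'g::ab_group_add \<Rightarrow> 'k::field" and gs :: "nat \<Rightarrow> 'g"
    and n :: nat and q :: 'k
  assumes n_ge_3: "n \<ge> 3" and q_neq_minus_one: "q \<noteq> -1" and params: "so_params chi gs n q"
begin

abbreviation PP :: "nat list \<Rightarrow> nat list \<Rightarrow> 'k" where
  "PP \<equiv> pp chi gs"

lemma chi_add: "i \<in> {1..n} \<Longrightarrow> chi i (a + b) = chi i a * chi i b"
  and chi_nonzero: "i \<in> {1..n} \<Longrightarrow> chi i a \<noteq> 0"
  and chi_gs_self: "i \<in> {1..n} \<Longrightarrow> chi i (gs i) = q"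
  and chi_adjacent: "1 < i \<Longrightarrow> i < n \<Longrightarrow> chi i (gs (i - 1)) * chi (i - 1) (gs i) = inverse q"
  and chi_branch: "chi (n - 2) (gs n) * chi n (gs (n - 2)) = inverse q"
  and chi_distant: "1 \<le> i \<Longrightarrow> i + 1 < j \<Longrightarrow> j \<le> n \<Longrightarrow> (i, j) \<noteq> (n - 2, n) \<Longrightarrow>
      chi i (gs j) * chi j (gs i) = 1"
  using params unfolding so_params_def by auto

lemma chi_zero: "i \<in> {1..n} \<Longrightarrow> chi i 0 = 1"
  using chi_add[of i 0 0] chi_nonzero[of i 0] by simp

lemma q_nonzero: "q \<noteq> 0"
  using chi_gs_self[of 1] chi_nonzero[of 1 "gs 1"] n_ge_3 by auto

lemma PP_append_left [simp]: "PP (u @ v) w = PP u w * PP v w"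
  and PP_Nil_left [simp]: "PP [] w = 1"
  and PP_single: "PP [a] [b] = chi a (gs b)"
  by (simp_all add: pp_def chiw_def gw_def)

lemma PP_Cons_left: "PP (a # u) w = PP [a] w * PP u w"
  using PP_append_left[of "[a]" u w] by simp

lemma PP_append_right: "set u \<subseteq> {1..n} \<Longrightarrow> PP u (v @ w) = PP u v * PP u w"
  by (induction u) (auto simp: pp_def chiw_def gw_def chi_add)

definition rel_ideal :: "'k ncpoly set" where
  "rel_ideal = {a \<in> ncpolys n. (to_elt a :: ('g, 'k) elt) \<in> ideal_gen chi (rels chi gs n)}"

definition cong_rel :: "'k ncpoly \<Rightarrow> 'k ncpoly \<Rightarrow> bool" (infix "\<simeq>" 50) where
  "a \<simeq> b \<longleftrightarrow> a - b \<in> rel_ideal"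

lemma mul_to_elt_ncpolys: "a \<in> ncpolys n \<Longrightarrow> b \<in> ncpolys n \<Longrightarrow>
    mul chi (to_elt a) (to_elt b) = (to_elt (a * b) :: ('g, 'k) elt)"
  using chi_zero by (intro mul_to_elt) auto

lemma rel_ideal_zero [intro]: "0 \<in> rel_ideal"
  using ideal_gen.zero[of chi "rels chi gs n"] by (simp add: rel_ideal_def to_elt_zero ncpolys_zero)

lemma rel_ideal_add [intro]: "a \<in> rel_ideal \<Longrightarrow> b \<in> rel_ideal \<Longrightarrow> a + b \<in> rel_ideal"
  unfolding rel_ideal_def by (auto simp: to_elt_add intro: ideal_gen.add)

lemma rel_ideal_mult_left [intro]: "a \<in> rel_ideal \<Longrightarrow> h \<in> ncpolys n \<Longrightarrow> h * a \<in> rel_ideal"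
  unfolding rel_ideal_def
  by (auto simp: mul_to_elt_ncpolys[symmetric] fsupp_to_elt intro: ideal_gen.lmul)

lemma rel_ideal_mult_right [intro]: "a \<in> rel_ideal \<Longrightarrow> h \<in> ncpolys n \<Longrightarrow> a * h \<in> rel_ideal"
  unfolding rel_ideal_def
  by (auto simp: mul_to_elt_ncpolys[symmetric] fsupp_to_elt intro: ideal_gen.rmul)

lemma rel_ideal_smult [intro]: "a \<in> rel_ideal \<Longrightarrow> smult c a \<in> rel_ideal"
  using rel_ideal_mult_left[of a "smult c 1"] by auto

lemma rel_ideal_minus [intro]: "a \<in> rel_ideal \<Longrightarrow> - a \<in> rel_ideal"
  using rel_ideal_smult[of a "- 1"] by (simp add: smult_minus_left)

lemma rel_ideal_diff [intro]: "a \<in> rel_ideal \<Longrightarrow> b \<in> rel_ideal \<Longrightarrow> a - b \<in> rel_ideal"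
  using rel_ideal_add[of a "- b"] by auto

lemma rel_ideal_skew_br_left [intro]: "a \<in> rel_ideal \<Longrightarrow> b \<in> ncpolys n \<Longrightarrow> skew_br p a b \<in> rel_ideal"
  and rel_ideal_skew_br_right [intro]: "b \<in> rel_ideal \<Longrightarrow> a \<in> ncpolys n \<Longrightarrow> skew_br p a b \<in> rel_ideal"
  unfolding skew_br_def by auto

lemma cong_rel_refl [simp]: "a \<simeq> a"
  by (simp add: cong_rel_def rel_ideal_zero)

lemma cong_rel_trans [trans]: "a \<simeq> b \<Longrightarrow> b \<simeq> c \<Longrightarrow> a \<simeq> c"
  using rel_ideal_add[of "a - b" "b - c"] by (simp add: cong_rel_def)

lemma cong_rel_sym: "a \<simeq> b \<Longrightarrow> b \<simeq> a"
  using rel_ideal_minus[of "a - b"] by (simp add: cong_rel_def)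

lemma cong_rel_mem: "a \<simeq> b \<Longrightarrow> b \<in> rel_ideal \<Longrightarrow> a \<in> rel_ideal"
  using rel_ideal_add[of "a - b" b] by (simp add: cong_rel_def)

lemma cong_rel_smult: "a \<simeq> b \<Longrightarrow> smult c a \<simeq> smult c b"
  using rel_ideal_smult[of "a - b" c] by (simp add: cong_rel_def smult_diff_right)

lemma cong_rel_diff: "a \<simeq> a' \<Longrightarrow> b \<simeq> b' \<Longrightarrow> a - b \<simeq> a' - b'"
  using rel_ideal_diff[of "a - a'" "b - b'"] by (simp add: cong_rel_def algebra_simps)

lemma skew_br_cong_left: "a \<simeq> a' \<Longrightarrow> b \<in> ncpolys n \<Longrightarrow> skew_br p a b \<simeq> skew_br p a' b"
  and skew_br_cong_right: "b \<simeq> b' \<Longrightarrow> a \<in> ncpolys n \<Longrightarrow> skew_br p a b \<simeq> skew_br p a b'"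
  by (auto simp: cong_rel_def skew_br_diff_left skew_br_diff_right)

lemma ev_map_to_elt:
  "admissible n (leaves t) \<Longrightarrow> ev chi gs (map_btree atom_to_elt t) = to_elt (evP chi gs t)"
proof (induction t)
  case (Nd l r)
  then have "admissible n (leaves l)" "admissible n (leaves r)" by auto
  with Nd.IH show ?case
    by (simp add: sbr_def deg_map_btree_fst skew_br_def to_elt_diff to_elt_smult
        mul_to_elt_ncpolys evP_ncpolys)
qed (simp add: case_prod_beta)

lemma evP_mem_rel_ideal:
  assumes "leaves t = map atom is" "set is \<subseteq> {1..n}"
    and "ev chi gs (map_btree atom_to_elt t) \<in> rels chi gs n"
  shows "evP chi gs t \<in> rel_ideal"
proof -
  have "admissible n (leaves t)" using assms(1,2) by (simp add: admissible_atoms)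
  then show ?thesis
    using assms(3) ideal_gen.gen[of _ "rels chi gs n" chi]
    by (simp add: rel_ideal_def ev_map_to_elt evP_ncpolys)
qed

lemma map_btree_atom_to_elt_atom: "map_btree atom_to_elt (Lf (atom i)) = xl i"
  by (simp add: xl_def xa_eq_atom_to_elt)

lemma serre_rel_left_mem:
  assumes "1 \<le> i" "i \<le> n - 2"
  shows "evP chi gs (Nd (Lf (atom i)) (Nd (Lf (atom i)) (Lf (atom (i + 1)))))
    \<in> rel_ideal" (is "evP chi gs ?t \<in> _")
proof (rule evP_mem_rel_ideal[of _ "[i, i, i + 1]"])
  show "ev chi gs (map_btree atom_to_elt ?t) \<in> rels chi gs n"
    unfolding btree.map(2) map_btree_atom_to_elt_atom rels_def
    by (rule UnI1, rule UnI1, rule UnI1, rule UnI1, rule UnI1) (use assms in auto)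
qed (use assms n_ge_3 in auto)

lemma serre_rel_right_mem:
  assumes "1 \<le> i" "i \<le> n - 2"
  shows "evP chi gs (Nd (Nd (Lf (atom i)) (Lf (atom (i + 1)))) (Lf (atom (i + 1))))
    \<in> rel_ideal" (is "evP chi gs ?t \<in> _")
proof (rule evP_mem_rel_ideal[of _ "[i, i + 1, i + 1]"])
  show "ev chi gs (map_btree atom_to_elt ?t) \<in> rels chi gs n"
    unfolding btree.map(2) map_btree_atom_to_elt_atom rels_def
    by (rule UnI1, rule UnI1, rule UnI1, rule UnI1, rule UnI2) (use assms in auto)
qed (use assms n_ge_3 in auto)

lemma branch_rel_left_mem:
  "evP chi gs (Nd (Lf (atom (n - 2))) (Nd (Lf (atom (n - 2))) (Lf (atom n))))
    \<in> rel_ideal" (is "evP chi gs ?t \<in> _")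
proof (rule evP_mem_rel_ideal[of _ "[n - 2, n - 2, n]"])
  show "ev chi gs (map_btree atom_to_elt ?t) \<in> rels chi gs n"
    unfolding btree.map(2) map_btree_atom_to_elt_atom rels_def
    by (rule UnI1, rule UnI1, rule UnI1, rule UnI2) auto
qed (use n_ge_3 in auto)

lemma branch_rel_right_mem:
  "evP chi gs (Nd (Nd (Lf (atom (n - 2))) (Lf (atom n))) (Lf (atom n)))
    \<in> rel_ideal" (is "evP chi gs ?t \<in> _")
proof (rule evP_mem_rel_ideal[of _ "[n - 2, n, n]"])
  show "ev chi gs (map_btree atom_to_elt ?t) \<in> rels chi gs n"
    unfolding btree.map(2) map_btree_atom_to_elt_atom rels_def
    by (rule UnI1, rule UnI1, rule UnI1, rule UnI2) auto
qed (use n_ge_3 in auto)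

lemma commutation_rel_mem:
  assumes "1 \<le> i" "i + 1 < j" "j \<le> n - 1"
  shows "evP chi gs (Nd (Lf (atom i)) (Lf (atom j)))
    \<in> rel_ideal" (is "evP chi gs ?t \<in> _")
proof (rule evP_mem_rel_ideal[of _ "[i, j]"])
  show "ev chi gs (map_btree atom_to_elt ?t) \<in> rels chi gs n"
    unfolding btree.map(2) map_btree_atom_to_elt_atom rels_def
    by (rule UnI1, rule UnI1, rule UnI2, rule CollectI, rule exI[of _ i], rule exI[of _ j])
      (use assms in auto)
qed (use assms n_ge_3 in auto)

lemma commutation_rel_branch_mem:
  assumes "1 \<le> i" "i \<le> n - 3"
  shows "evP chi gs (Nd (Lf (atom i)) (Lf (atom n)))
    \<in> rel_ideal" (is "evP chi gs ?t \<in> _")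
proof (rule evP_mem_rel_ideal[of _ "[i, n]"])
  show "ev chi gs (map_btree atom_to_elt ?t) \<in> rels chi gs n"
    unfolding btree.map(2) map_btree_atom_to_elt_atom rels_def
    by (rule UnI1, rule UnI2) (use assms in auto)
qed (use assms n_ge_3 in auto)

section \<open>Independence of the bracketing\<close>

lemma jacobi_mem:
  assumes "a \<in> ncpolys n" "b \<in> ncpolys n"
    and "skew_br pac a c \<in> rel_ideal" "skew_br pbc b c \<in> rel_ideal"
  shows "skew_br (pac * pbc) (skew_br pab a b) c \<in> rel_ideal"
  unfolding skew_br_jacobi using assms by blast

lemma jacobi_cong_ac:
  assumes "a \<in> ncpolys n" "b \<in> ncpolys n" and "skew_br pac a c \<in> rel_ideal"
  shows "skew_br (pac * pbc) (skew_br pab a b) c \<simeq> skew_br (pab * pac) a (skew_br pbc b c)"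
proof -
  have "skew_br (pac * pbc) (skew_br pab a b) c - skew_br (pab * pac) a (skew_br pbc b c)
      = smult pbc (skew_br pac a c * b) - smult pab (b * skew_br pac a c)"
    by (simp add: skew_br_jacobi)
  also have "\<dots> \<in> rel_ideal" using assms by blast
  finally show ?thesis unfolding cong_rel_def .
qed

lemma jacobi_cong_bc:
  assumes "a \<in> ncpolys n" and "skew_br pbc b c \<in> rel_ideal"
  shows "skew_br (pac * pbc) (skew_br pab a b) c
    \<simeq> smult pbc (skew_br pac a c * b) - smult pab (b * skew_br pac a c)"
proof -
  have "skew_br (pac * pbc) (skew_br pab a b) c
      - (smult pbc (skew_br pac a c * b) - smult pab (b * skew_br pac a c))
      = skew_br (pab * pac) a (skew_br pbc b c)"
    by (simp add: skew_br_jacobi)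
  also have "\<dots> \<in> rel_ideal" using assms by blast
  finally show ?thesis unfolding cong_rel_def .
qed

lemma skew_br_mult_right_cong:
  assumes "skew_br p u b \<in> rel_ideal" "skew_br p' u c \<simeq> z" "b \<in> ncpolys n" "c \<in> ncpolys n"
  shows "skew_br (p * p') u (b * c) \<simeq> smult p (b * z)"
proof -
  have "skew_br (p * p') u (b * c) - smult p (b * z)
      = skew_br p u b * c + smult p (b * (skew_br p' u c - z))"
    by (simp add: skew_br_mult_right algebra_simps smult_distribs)
  also have "\<dots> \<in> rel_ideal" using assms unfolding cong_rel_def by blast
  finally show ?thesis unfolding cong_rel_def .
qed

lemma evP_skew_br_mem:
  assumes "admissible n (leaves t)" "f \<in> ncpolys n"
    and "\<forall>x\<in>set (leaves t). skew_br (PP (snd x) d) (fst x) f \<in> rel_ideal"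
  shows "skew_br (PP (deg t) d) (evP chi gs t) f \<in> rel_ideal"
  using assms
proof (induction t)
  case (Nd l r)
  then show ?case by (auto intro!: jacobi_mem evP_ncpolys)
qed simp

definition far_commuting :: "('k ncpoly \<times> nat list) list \<Rightarrow> bool" where
  "far_commuting L \<longleftrightarrow>
     (\<forall>i j. i + 1 < j \<and> j < length L \<longrightarrow> evP chi gs (Nd (Lf (L ! i)) (Lf (L ! j))) \<in> rel_ideal)"

lemma far_commuting_appendD:
  assumes "far_commuting (xs @ ys)"
  shows "far_commuting xs" "far_commuting ys"
proof -
  note far = assms[unfolded far_commuting_def, rule_format]
  show "far_commuting xs"
    unfolding far_commuting_def
  proof (intro allI impI)
    fix i j assume "i + 1 < j \<and> j < length xs"
    then show "evP chi gs (Nd (Lf (xs ! i)) (Lf (xs ! j))) \<in> rel_ideal"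
      using far[of i j] by (simp add: nth_append)
  qed
  show "far_commuting ys"
    unfolding far_commuting_def
  proof (intro allI impI)
    fix i j assume "i + 1 < j \<and> j < length ys"
    then show "evP chi gs (Nd (Lf (ys ! i)) (Lf (ys ! j))) \<in> rel_ideal"
      using far[of "length xs + i" "length xs + j"] by (simp add: nth_append)
  qed
qed

lemma far_commuting_last:
  assumes "far_commuting (L1 @ L2 @ [v])" "L2 \<noteq> []" "x \<in> set L1"
  shows "evP chi gs (Nd (Lf x) (Lf v)) \<in> rel_ideal"
proof -
  obtain i where i: "i < length L1" "x = L1 ! i" using assms(3) by (auto simp: in_set_conv_nth)
  define j where "j = length L1 + length L2"
  have "i + 1 < j" "j < length (L1 @ L2 @ [v])" using i assms(2) by (cases L2, auto simp: j_def)+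
  then have "evP chi gs (Nd (Lf ((L1 @ L2 @ [v]) ! i)) (Lf ((L1 @ L2 @ [v]) ! j))) \<in> rel_ideal"
    using assms(1) unfolding far_commuting_def by blast
  moreover have "(L1 @ L2 @ [v]) ! i = x" "(L1 @ L2 @ [v]) ! j = v"
    using i by (simp_all add: nth_append j_def)
  ultimately show ?thesis by simp
qed

lemma lnorm_rotate_cong:
  assumes "L1 \<noteq> []" "L2 \<noteq> []" "admissible n (L1 @ L2 @ [v])"
    and far: "far_commuting (L1 @ L2 @ [v])"
  shows "evP chi gs (Nd (lnorm L1) (lnorm (L2 @ [v])))
    \<simeq> evP chi gs (Nd (Nd (lnorm L1) (lnorm L2)) (Lf v))"
proof -
  define X where "X = evP chi gs (lnorm L1)"
  define Y where "Y = evP chi gs (lnorm L2)"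
  define c1 where "c1 = concat (map snd L1)"
  define c2 where "c2 = concat (map snd L2)"
  have adm: "admissible n L1" "admissible n L2" "admissible n [v]" using assms(3) by auto
  then have polys: "X \<in> ncpolys n" "Y \<in> ncpolys n" "fst v \<in> ncpolys n"
    using assms(1,2) by (auto simp: X_def Y_def admissible_def leaves_lnorm intro!: evP_ncpolys)
  have "skew_br (PP (deg (lnorm L1)) (snd v)) X (fst v) \<in> rel_ideal"
    unfolding X_def using adm polys far_commuting_last[OF far assms(2)] assms(1)
    by (intro evP_skew_br_mem) (auto simp: leaves_lnorm)
  then have Xv: "skew_br (PP c1 (snd v)) X (fst v) \<in> rel_ideal"
    using assms(1) by (simp add: c1_def deg_eq_concat_leaves leaves_lnorm)
  have "set c1 \<subseteq> {1..n}" using adm by (auto simp: c1_def admissible_def)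
  then have "evP chi gs (Nd (lnorm L1) (lnorm (L2 @ [v])))
      = skew_br (PP c1 c2 * PP c1 (snd v)) X (skew_br (PP c2 (snd v)) Y (fst v))"
    using assms(1,2) by (simp add: lnorm_snoc X_def Y_def c1_def c2_def deg_eq_concat_leaves
        leaves_lnorm PP_append_right)
  also have "\<dots> \<simeq> skew_br (PP c1 (snd v) * PP c2 (snd v)) (skew_br (PP c1 c2) X Y) (fst v)"
    using jacobi_cong_ac[OF polys(1,2) Xv] by (rule cong_rel_sym)
  also have "\<dots> = evP chi gs (Nd (Nd (lnorm L1) (lnorm L2)) (Lf v))"
    using assms(1,2) by (simp add: X_def Y_def c1_def c2_def deg_eq_concat_leaves leaves_lnorm)
  finally show ?thesis .
qed

lemma evP_Nd_cong:
  assumes "evP chi gs A \<simeq> evP chi gs A'" "evP chi gs B \<simeq> evP chi gs B'"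
    and "deg A = deg A'" "deg B = deg B'" and "evP chi gs A' \<in> ncpolys n" "evP chi gs B \<in> ncpolys n"
  shows "evP chi gs (Nd A B) \<simeq> evP chi gs (Nd A' B')"
proof -
  have "evP chi gs (Nd A B) \<simeq> skew_br (PP (deg A) (deg B)) (evP chi gs A') (evP chi gs B)"
    using assms(1,6) by (simp add: skew_br_cong_left)
  also have "\<dots> \<simeq> evP chi gs (Nd A' B')"
    using assms(2-5) by (simp add: skew_br_cong_right)
  finally show ?thesis .
qed

lemma evP_lnorm_append_cong:
  assumes "L1 \<noteq> []" "L2 \<noteq> []" "admissible n (L1 @ L2)" "far_commuting (L1 @ L2)"
  shows "evP chi gs (Nd (lnorm L1) (lnorm L2)) \<simeq> evP chi gs (lnorm (L1 @ L2))"
  using assms(2-4)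
proof (induction L2 rule: rev_induct)
  case (snoc v L2)
  show ?case
  proof (cases "L2 = []")
    case True
    then show ?thesis using assms(1) by (simp add: lnorm_snoc)
  next
    case False
    have adm: "admissible n (L1 @ L2)" "admissible n [v]" using snoc.prems(2) by auto
    have far: "far_commuting (L1 @ L2)"
      using far_commuting_appendD(1)[of "L1 @ L2" "[v]"] snoc.prems(3) by simp
    have "evP chi gs (Nd (lnorm L1) (lnorm (L2 @ [v])))
        \<simeq> evP chi gs (Nd (Nd (lnorm L1) (lnorm L2)) (Lf v))"
      using lnorm_rotate_cong[OF assms(1) False] snoc.prems by simp
    also have "\<dots> \<simeq> evP chi gs (Nd (lnorm (L1 @ L2)) (Lf v))"
    proof (rule evP_Nd_cong)
      show "evP chi gs (Nd (lnorm L1) (lnorm L2)) \<simeq> evP chi gs (lnorm (L1 @ L2))"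
        using snoc.IH False adm far by simp
      show "deg (Nd (lnorm L1) (lnorm L2)) = deg (lnorm (L1 @ L2))"
        using assms(1) False by (simp add: deg_lnorm)
      show "evP chi gs (lnorm (L1 @ L2)) \<in> ncpolys n" "evP chi gs (Lf v) \<in> ncpolys n"
        using assms(1) adm by (simp_all add: evP_ncpolys leaves_lnorm admissible_def)
    qed simp_all
    also have "\<dots> = evP chi gs (lnorm (L1 @ L2 @ [v]))"
      using assms(1) by (simp add: lnorm_snoc[symmetric])
    finally show ?thesis .
  qed
qed simp

theorem evP_cong_lnorm:
  "admissible n (leaves t) \<Longrightarrow> far_commuting (leaves t) \<Longrightarrow> evP chi gs t \<simeq> evP chi gs (lnorm (leaves t))"
proof (induction t)
  case (Nd l r)
  then have adm: "admissible n (leaves l)" "admissible n (leaves r)"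
    and far: "far_commuting (leaves l)" "far_commuting (leaves r)"
    using far_commuting_appendD[of "leaves l" "leaves r"] by simp_all
  have "evP chi gs (Nd l r) \<simeq> evP chi gs (Nd (lnorm (leaves l)) (lnorm (leaves r)))"
  proof (rule evP_Nd_cong)
    show "evP chi gs l \<simeq> evP chi gs (lnorm (leaves l))" "evP chi gs r \<simeq> evP chi gs (lnorm (leaves r))"
      using Nd.IH adm far by simp_all
    show "deg l = deg (lnorm (leaves l))" "deg r = deg (lnorm (leaves r))"
      by (simp_all add: leaves_ne leaves_lnorm deg_eq_concat_leaves)
    show "evP chi gs (lnorm (leaves l)) \<in> ncpolys n" "evP chi gs r \<in> ncpolys n"
      using adm by (simp_all add: evP_ncpolys leaves_lnorm leaves_ne)
  qed
  also have "\<dots> \<simeq> evP chi gs (lnorm (leaves (Nd l r)))"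
    using evP_lnorm_append_cong[OF leaves_ne leaves_ne] Nd.prems by simp
  finally show ?case .
qed simp

lemma ev_eq_to_elt_evP:
  assumes "leaves t = map atom_to_elt L" "admissible n L"
  obtains t' where "ev chi gs t = to_elt (evP chi gs t')" "leaves t' = L"
proof
  let ?t' = "map_btree (\<lambda>(e, d). (of_elt e, d)) t"
  show leaves': "leaves ?t' = L"
    unfolding leaves_map_btree assms(1) by (induction L) auto
  have "map_btree atom_to_elt ?t' = map_btree id t"
    unfolding btree.map_comp
  proof (rule btree.map_cong)
    fix z assume "z \<in> set_btree t"
    then show "(atom_to_elt \<circ> (\<lambda>(e, d). (of_elt e, d))) z = id z"
      using assms(1) by (auto simp: set_btree_eq_leaves)
  qed simp
  then show "ev chi gs t = to_elt (evP chi gs ?t')"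
    using ev_map_to_elt[of ?t'] leaves' assms(2) by (simp add: btree.map_id)
qed

lemma eqU_to_elt: "a \<simeq> b \<Longrightarrow> eqU chi gs n (to_elt a) (to_elt b)"
  by (simp add: eqU_def cong_rel_def rel_ideal_def to_elt_diff)

theorem eqU_bracketings:
  assumes "admissible n L" "far_commuting L"
    and "leaves t1 = map atom_to_elt L" "leaves t2 = map atom_to_elt L"
  shows "eqU chi gs n (ev chi gs t1) (ev chi gs t2)"
proof -
  obtain t1' t2' where t1': "ev chi gs t1 = to_elt (evP chi gs t1')" "leaves t1' = L"
    and t2': "ev chi gs t2 = to_elt (evP chi gs t2')" "leaves t2' = L"
    using ev_eq_to_elt_evP assms by metis
  have "evP chi gs t1' \<simeq> evP chi gs (lnorm L)" "evP chi gs t2' \<simeq> evP chi gs (lnorm L)"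
    using evP_cong_lnorm[of t1'] evP_cong_lnorm[of t2'] assms(1,2) t1'(2) t2'(2) by simp_all
  then have "evP chi gs t1' \<simeq> evP chi gs t2'" by (blast intro: cong_rel_trans cong_rel_sym)
  then show ?thesis unfolding t1'(1) t2'(1) by (rule eqU_to_elt)
qed

section \<open>Serre chains\<close>

lemma mem_rel_ideal_of_cong_neg:
  assumes "t \<simeq> z" "t \<simeq> - smult q z"
  shows "t \<in> rel_ideal"
proof -
  have "smult (1 + q) z = (t + smult q z) - (t - z)"
    by (simp add: smult_add_left algebra_simps)
  also have "\<dots> \<in> rel_ideal"
    using rel_ideal_diff[OF assms(2)[unfolded cong_rel_def] assms(1)[unfolded cong_rel_def]] by simp
  finally have "smult (inverse (1 + q)) (smult (1 + q) z) \<in> rel_ideal" by blast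
  moreover have "1 + q \<noteq> 0" using q_neq_minus_one by (metis add.commute add_eq_0_iff2)
  ultimately have "z \<in> rel_ideal" by simp
  with assms(1) show ?thesis by (rule cong_rel_mem)
qed

text \<open>With \<open>u = [A, b]\<close> and \<open>z = [A, [b, c]]\<close>, the bracket \<open>[[u, c], b]\<close> is congruent both to
  \<open>[z, b]\<close> and, expanding \<open>[c, b]\<close> through \<open>[b, c]\<close>, to \<open>-q [z, b]\<close>.\<close>

lemma serre_bracket_mem:
  assumes polys: "A \<in> ncpolys n" "b \<in> ncpolys n" "c \<in> ncpolys n"
    and Abb: "skew_br (pab * q) (skew_br pab A b) b \<in> rel_ideal"
    and Ac: "skew_br pac A c \<in> rel_ideal"
    and bbc: "skew_br (q * pbc) b (skew_br pbc b c) \<in> rel_ideal"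
    and linked: "pbc * pcb * q = 1"
  shows "skew_br (pab * q * pcb) (skew_br (pac * pbc) (skew_br pab A b) c) b \<in> rel_ideal"
proof -
  define u where "u = skew_br pab A b"
  define w where "w = skew_br pbc b c"
  define z where "z = skew_br (pab * pac) A w"
  define R where "R = pab * q * (pac * pbc)"
  have "u \<in> ncpolys n" using polys by (auto simp: u_def)
  have pbc: "pbc \<noteq> 0" using linked by auto
  have pcb: "pcb = 1 / (q * pbc)" using linked pbc q_nonzero by (simp add: field_simps)
  have ucz: "skew_br (pac * pbc) u c \<simeq> z"
    unfolding u_def z_def w_def using polys(1,2) Ac by (rule jacobi_cong_ac)
  have "skew_br (pab * q * pcb) (skew_br (pac * pbc) u c) b \<simeq> skew_br R u (skew_br pcb c b)"
    using jacobi_cong_ac[OF \<open>u \<in> ncpolys n\<close> polys(3) Abb[folded u_def], of pcb "pac * pbc"]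
    by (simp add: R_def ac_simps)
  also have "skew_br pcb c b = smult (inverse pbc) (smult ((q - 1) / q) (b * c) - w)"
    unfolding w_def skew_br_def pcb by (rule ncpoly_eqI) (simp add: field_simps pbc q_nonzero)
  then have "skew_br R u (skew_br pcb c b)
      = smult (inverse pbc) (smult ((q - 1) / q) (skew_br R u (b * c)) - skew_br R u w)"
    by (simp add: skew_br_smult_right skew_br_diff_right[symmetric])
  also have "\<dots> \<simeq> smult (inverse pbc)
      (smult ((q - 1) / q) (smult (pab * q) (b * z)) - (smult (q * pbc) (z * b) - smult pab (b * z)))"
  proof (intro cong_rel_smult cong_rel_diff)
    show "skew_br R u (b * c) \<simeq> smult (pab * q) (b * z)"
      unfolding R_def using Abb[folded u_def] ucz polys(2,3) by (rule skew_br_mult_right_cong)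
    show "skew_br R u w \<simeq> smult (q * pbc) (z * b) - smult pab (b * z)"
      using jacobi_cong_bc[OF polys(1) bbc[folded w_def], of "pab * pac" pab]
      by (simp add: R_def u_def z_def ac_simps)
  qed
  also have "\<dots> = - smult q (skew_br (pab * q * pcb) z b)"
    unfolding skew_br_def pcb by (rule ncpoly_eqI) (simp add: field_simps pbc q_nonzero)
  finally have "skew_br (pab * q * pcb) (skew_br (pac * pbc) u c) b
      \<simeq> - smult q (skew_br (pab * q * pcb) z b)" .
  moreover have "skew_br (pab * q * pcb) (skew_br (pac * pbc) u c) b \<simeq> skew_br (pab * q * pcb) z b"
    using ucz polys(2) by (rule skew_br_cong_left)
  ultimately show ?thesis unfolding u_def by (intro mem_rel_ideal_of_cong_neg)
qed

definition linked :: "nat \<Rightarrow> nat \<Rightarrow> bool" where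
  "linked a b \<longleftrightarrow> PP [a] [b] * PP [b] [a] * q = 1
     \<and> evP chi gs (Nd (Lf (atom a)) (Nd (Lf (atom a)) (Lf (atom b)))) \<in> rel_ideal
     \<and> evP chi gs (Nd (Nd (Lf (atom a)) (Lf (atom b))) (Lf (atom b))) \<in> rel_ideal"

definition unlinked :: "nat \<Rightarrow> nat \<Rightarrow> bool" where
  "unlinked a b \<longleftrightarrow> PP [a] [b] * PP [b] [a] = 1 \<and> evP chi gs (Nd (Lf (atom a)) (Lf (atom b))) \<in> rel_ideal"

definition serre_chain :: "nat list \<Rightarrow> bool" where
  "serre_chain vs \<longleftrightarrow> set vs \<subseteq> {1..n}
     \<and> (\<forall>i. Suc i < length vs \<longrightarrow> linked (vs ! i) (vs ! Suc i))
     \<and> (\<forall>i j. i + 1 < j \<and> j < length vs \<longrightarrow> unlinked (vs ! i) (vs ! j))"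

lemma unlinked_sym: "unlinked a b \<Longrightarrow> unlinked b a"
proof -
  assume ab: "unlinked a b"
  then have "PP [b] [a] * PP [a] [b] = 1" by (simp add: unlinked_def mult.commute)
  moreover have "skew_br (PP [a] [b]) (xgen a) (xgen b) \<in> rel_ideal"
    using ab by (simp add: unlinked_def atom_def)
  ultimately show "unlinked b a"
    by (simp add: unlinked_def atom_def skew_br_swap[of "PP [b] [a]"] rel_ideal_smult)
qed

definition prefix_br :: "nat list \<Rightarrow> nat \<Rightarrow> 'k ncpoly" where
  "prefix_br vs s = evP chi gs (lnorm (map atom (take s vs)))"

lemma prefix_br_ncpolys: "set vs \<subseteq> {1..n} \<Longrightarrow> 1 \<le> s \<Longrightarrow> s \<le> length vs \<Longrightarrow> prefix_br vs s \<in> ncpolys n"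
  unfolding prefix_br_def
  by (rule evP_ncpolys, subst leaves_lnorm) (auto intro!: admissible_atoms dest: in_set_takeD)

lemma prefix_br_1: "vs \<noteq> [] \<Longrightarrow> prefix_br vs 1 = xgen (vs ! 0)"
  by (cases vs) (auto simp: prefix_br_def atom_def)

lemma prefix_br_Suc: "1 \<le> s \<Longrightarrow> s < length vs \<Longrightarrow>
   prefix_br vs (Suc s) = skew_br (PP (take s vs) [vs ! s]) (prefix_br vs s) (xgen (vs ! s))"
proof -
  assume s: "1 \<le> s" "s < length vs"
  then have "map atom (take s vs) \<noteq> []" by auto
  with s show ?thesis
    by (simp add: prefix_br_def take_Suc_conv_app_nth lnorm_snoc deg_lnorm)
qed

context
  fixes vs assumes chain: "serre_chain vs"
begin

lemma chain_set: "set vs \<subseteq> {1..n}"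
  and chain_linked: "Suc i < length vs \<Longrightarrow> linked (vs ! i) (vs ! Suc i)"
  and chain_unlinked: "i + 1 < j \<Longrightarrow> j < length vs \<Longrightarrow> unlinked (vs ! i) (vs ! j)"
  using chain by (auto simp: serre_chain_def)

lemma chain_xgen: "i < length vs \<Longrightarrow> xgen (vs ! i) \<in> ncpolys n"
  using chain_set by (intro ncpolys_monom) (auto dest: nth_mem)

lemma chain_PP_self: "i < length vs \<Longrightarrow> PP [vs ! i] [vs ! i] = q"
  using chain_set nth_mem chi_gs_self by (simp add: PP_single subset_iff)

lemma chain_prefix_br: "1 \<le> s \<Longrightarrow> s \<le> length vs \<Longrightarrow> prefix_br vs s \<in> ncpolys n"
  using chain_set by (rule prefix_br_ncpolys)

lemma prefix_br_commutes_later: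
  assumes "1 \<le> s" "s < l" "l < length vs"
  shows "skew_br (PP (take s vs) [vs ! l]) (prefix_br vs s) (xgen (vs ! l)) \<in> rel_ideal"
proof -
  let ?L = "map atom (take s vs) :: ('k ncpoly \<times> nat list) list"
  have ne: "?L \<noteq> []" using assms by auto
  have adm: "admissible n ?L"
    using chain_set set_take_subset by (intro admissible_atoms) (rule order_trans)
  have comm: "skew_br (PP (snd x) [vs ! l]) (fst x) (xgen (vs ! l)) \<in> rel_ideal" if "x \<in> set ?L" for x
  proof -
    obtain i where "i < s" "x = atom (vs ! i)" using \<open>x \<in> set ?L\<close> assms(3)
      by (auto simp: in_set_conv_nth)
    then show ?thesis using chain_unlinked[of i l] assms by (simp add: unlinked_def)
  qed
  have "skew_br (PP (deg (lnorm ?L)) [vs ! l]) (evP chi gs (lnorm ?L)) (xgen (vs ! l)) \<in> rel_ideal"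
    by (rule evP_skew_br_mem) (use ne adm comm chain_xgen[OF assms(3)] in \<open>simp_all add: leaves_lnorm\<close>)
  then show ?thesis using ne by (simp add: prefix_br_def deg_lnorm)
qed

lemma prefix_br_serre:
  assumes "1 \<le> j" "j < length vs"
  shows "skew_br (PP (take j vs) [vs ! j] * q)
    (skew_br (PP (take j vs) [vs ! j]) (prefix_br vs j) (xgen (vs ! j))) (xgen (vs ! j)) \<in> rel_ideal"
proof (cases "j = 1")
  case True
  have "linked (vs ! 0) (vs ! 1)" using chain_linked[of 0] assms True by simp
  moreover have "take 1 vs = [vs ! 0]" "prefix_br vs 1 = xgen (vs ! 0)"
    using assms prefix_br_1[of vs] by (cases vs, auto)+
  ultimately show ?thesis
    using True chain_PP_self[of 1] assms PP_Cons_left[of "vs ! 0" "[vs ! 1]" "[vs ! 1]"]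
    by (simp add: linked_def)
next
  case False
  define s where "s = j - 1"
  define D a b where "D = take s vs" and "a = vs ! s" and "b = vs ! j"
  have s: "1 \<le> s" "Suc s = j" using assms False by (auto simp: s_def)
  have take_j: "take j vs = D @ [a]"
    using s assms by (simp add: D_def a_def take_Suc_conv_app_nth[symmetric])
  have prefix_j: "prefix_br vs j = skew_br (PP D [a]) (prefix_br vs s) (xgen a)"
    using prefix_br_Suc[of s vs] s assms by (simp add: D_def a_def)
  have polys: "prefix_br vs s \<in> ncpolys n" "xgen a \<in> ncpolys n" "xgen b \<in> ncpolys n"
    using s assms by (auto simp: a_def b_def intro!: chain_prefix_br chain_xgen)
  have Wb: "skew_br (PP D [b]) (prefix_br vs s) (xgen b) \<in> rel_ideal"
    using prefix_br_commutes_later[of s j] s assms by (simp add: D_def b_def)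
  have abb: "skew_br (PP [a] [b] * q) (skew_br (PP [a] [b]) (xgen a) (xgen b)) (xgen b) \<in> rel_ideal"
    using chain_linked[of s] chain_PP_self[of j] PP_Cons_left[of a "[b]" "[b]"] s assms
    by (simp add: linked_def a_def b_def)
  let ?w = "skew_br (PP [a] [b]) (xgen a) (xgen b)"
  have "skew_br (PP D [b] * PP [a] [b]) (skew_br (PP D [a]) (prefix_br vs s) (xgen a)) (xgen b)
      \<simeq> skew_br (PP D [a] * PP D [b]) (prefix_br vs s) ?w"
    using polys(1,2) Wb by (rule jacobi_cong_ac)
  then have "skew_br (PP D [b] * PP [a] [b] * q)
      (skew_br (PP D [b] * PP [a] [b]) (skew_br (PP D [a]) (prefix_br vs s) (xgen a)) (xgen b)) (xgen b)
    \<simeq> skew_br (PP D [b] * PP [a] [b] * q) (skew_br (PP D [a] * PP D [b]) (prefix_br vs s) ?w) (xgen b)"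
    using polys(3) by (rule skew_br_cong_left)
  moreover have "skew_br (PP D [b] * (PP [a] [b] * q))
      (skew_br (PP D [a] * PP D [b]) (prefix_br vs s) ?w) (xgen b) \<in> rel_ideal"
    by (rule jacobi_mem[OF polys(1) _ Wb abb]) (use polys in blast)
  then have "skew_br (PP D [b] * PP [a] [b] * q)
      (skew_br (PP D [a] * PP D [b]) (prefix_br vs s) ?w) (xgen b) \<in> rel_ideal"
    by (simp add: mult.assoc)
  ultimately show ?thesis
    unfolding take_j prefix_j by (simp add: b_def cong_rel_mem)
qed

lemma prefix_br_absorbs:
  assumes "1 \<le> j" "j + 1 < length vs"
  shows "skew_br (PP (take (j + 2) vs) [vs ! j]) (prefix_br vs (j + 2)) (xgen (vs ! j)) \<in> rel_ideal"
proof -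
  define D b c where "D = take j vs" and "b = vs ! j" and "c = vs ! (j + 1)"
  have polys: "prefix_br vs j \<in> ncpolys n" "xgen b \<in> ncpolys n" "xgen c \<in> ncpolys n"
    using assms by (auto simp: b_def c_def intro!: chain_prefix_br chain_xgen)
  have "b \<in> set vs" using assms by (simp add: b_def)
  then have b: "b \<in> {1..n}" "PP [b] [b] = q"
    using chain_set chain_PP_self[of j] assms by (auto simp: b_def[symmetric])
  have Wbb: "skew_br (PP D [b] * q) (skew_br (PP D [b]) (prefix_br vs j) (xgen b)) (xgen b) \<in> rel_ideal"
    using prefix_br_serre[of j] assms by (simp add: D_def b_def)
  have Wc: "skew_br (PP D [c]) (prefix_br vs j) (xgen c) \<in> rel_ideal"
    using prefix_br_commutes_later[of j "j + 1"] assms by (simp add: D_def c_def)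
  have "linked b c" using chain_linked[of j] assms by (simp add: b_def c_def)
  moreover have "PP [b] [b, c] = q * PP [b] [c]"
    using PP_append_right[of "[b]" "[b]" "[c]"] b by simp
  ultimately have bbc: "skew_br (q * PP [b] [c]) (xgen b) (skew_br (PP [b] [c]) (xgen b) (xgen c)) \<in> rel_ideal"
    and bc: "PP [b] [c] * PP [c] [b] * q = 1"
    by (simp_all add: linked_def)
  have take_j2: "take (j + 2) vs = D @ [b, c]"
    using assms by (simp add: D_def b_def c_def take_Suc_conv_app_nth numeral_2_eq_2)
  have prefix_j2: "prefix_br vs (j + 2)
      = skew_br (PP D [c] * PP [b] [c]) (skew_br (PP D [b]) (prefix_br vs j) (xgen b)) (xgen c)"
    using prefix_br_Suc[of j vs] prefix_br_Suc[of "j + 1" vs] assms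
    by (simp add: D_def b_def c_def take_Suc_conv_app_nth)
  have coeff: "PP (D @ [b, c]) [b] = PP D [b] * q * PP [c] [b]"
    using b PP_Cons_left[of b "[c]" "[b]"] by (simp add: ac_simps)
  show ?thesis
    unfolding b_def[symmetric] take_j2 prefix_j2 coeff by (rule serre_bracket_mem[OF polys Wbb Wc bbc bc])
qed

lemma prefix_br_commutes_earlier:
  assumes "1 \<le> j" "j + 2 \<le> s" "s \<le> length vs"
  shows "skew_br (PP (take s vs) [vs ! j]) (prefix_br vs s) (xgen (vs ! j)) \<in> rel_ideal"
  using assms(2,3)
proof (induction s rule: dec_induct)
  case base
  then show ?case using prefix_br_absorbs[of j] assms(1) by simp
next
  case (step s)
  then have s: "s < length vs" "1 \<le> s" "j + 2 \<le> s" using assms(1) by auto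
  have "evP chi gs (Nd (Lf (atom (vs ! s))) (Lf (atom (vs ! j)))) \<in> rel_ideal"
    using unlinked_sym[OF chain_unlinked[of j s]] s by (simp add: unlinked_def)
  then have "skew_br (PP (take s vs) [vs ! j] * PP [vs ! s] [vs ! j])
      (skew_br (PP (take s vs) [vs ! s]) (prefix_br vs s) (xgen (vs ! s))) (xgen (vs ! j)) \<in> rel_ideal"
    using step s by (intro jacobi_mem chain_prefix_br chain_xgen) auto
  then show ?case using prefix_br_Suc[of s vs] s by (simp add: take_Suc_conv_app_nth)
qed

lemma serre_chain_commutes:
  assumes "0 < j" "j + 1 < length vs"
  shows "evP chi gs (Nd (lnorm (map atom vs)) (Lf (atom (vs ! j)))) \<in> rel_ideal"
proof -
  have "vs \<noteq> []" using assms by auto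
  then show ?thesis
    using prefix_br_commutes_earlier[of j "length vs"] assms by (simp add: prefix_br_def deg_lnorm)
qed

end

lemma linked_succ: "1 \<le> a \<Longrightarrow> a \<le> n - 2 \<Longrightarrow> linked a (a + 1)"
  using chi_adjacent[of "a + 1"] q_nonzero serre_rel_left_mem[of a] serre_rel_right_mem[of a]
  by (simp add: linked_def PP_single field_simps)

lemma linked_branch: "linked (n - 2) n"
  using chi_branch q_nonzero branch_rel_left_mem branch_rel_right_mem
  by (simp add: linked_def PP_single field_simps)

lemma unlinked_distant:
  assumes "1 \<le> a" "a + 1 < b" "b \<le> n - 1"
  shows "unlinked a b"
proof -
  have "chi a (gs b) * chi b (gs a) = 1" using assms n_ge_3 by (intro chi_distant) auto
  then show ?thesis using commutation_rel_mem[OF assms] by (simp add: unlinked_def PP_single)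
qed

lemma unlinked_branch:
  assumes "1 \<le> a" "a \<le> n - 3"
  shows "unlinked a n"
proof -
  have "chi a (gs n) * chi n (gs a) = 1" using assms n_ge_3 by (intro chi_distant) auto
  then show ?thesis using commutation_rel_branch_mem[OF assms] by (simp add: unlinked_def PP_single)
qed

lemma length_ew: "k < n \<Longrightarrow> length (ew k n) = n - k"
  by (simp add: ew_def)

lemma nth_ew: "k < n \<Longrightarrow> i < n - k \<Longrightarrow> ew k n ! i = (if i < n - 1 - k then k + i else n)"
  by (auto simp: ew_def nth_append)

lemma serre_chain_ew:
  assumes "1 \<le> k" "k < n"
  shows "serre_chain (ew k n)"
  unfolding serre_chain_def
proof (intro conjI allI impI)
  show "set (ew k n) \<subseteq> {1..n}" using assms by (auto simp: ew_def)
  fix i assume i: "Suc i < length (ew k n)"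
  show "linked (ew k n ! i) (ew k n ! Suc i)"
  proof (cases "Suc i < n - 1 - k")
    case True
    then show ?thesis using i assms linked_succ[of "k + i"] by (simp add: length_ew nth_ew)
  next
    case False
    then have "ew k n ! i = n - 2" "ew k n ! Suc i = n" using i assms by (auto simp: length_ew nth_ew)
    then show ?thesis using linked_branch by simp
  qed
next
  fix i j assume "i + 1 < j \<and> j < length (ew k n)"
  then show "unlinked (ew k n ! i) (ew k n ! j)"
    using assms unlinked_distant[of "k + i" "k + j"] unlinked_branch[of "k + i"]
    by (auto simp: length_ew nth_ew)
qed

text \<open>The leaves \<open>y\<^sub>k, x\<^bsub>n+1\<^esub>, \<dots>, x\<^sub>m\<close> of the theorem, where \<open>x\<^sub>i = x\<^bsub>2n-i\<^esub>\<close> for \<open>i > n\<close>.\<close>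

definition ebr_word :: "nat \<Rightarrow> nat \<Rightarrow> ('k ncpoly \<times> nat list) list" where
  "ebr_word k m =
     (evP chi gs (lnorm (map atom (ew k n))), ew k n) # map (\<lambda>i. atom (2 * n - i)) [n + 1..<m + 1]"

lemma ew_ne: "ew k n \<noteq> []"
  by (simp add: ew_def)

lemma admissible_ew: "1 \<le> k \<Longrightarrow> admissible n (map atom (ew k n) :: ('k ncpoly \<times> nat list) list)"
  using n_ge_3 by (intro admissible_atoms) (auto simp: ew_def)

lemma ebr_eq_to_elt:
  assumes "1 \<le> k"
  shows "ebr chi gs k n = to_elt (evP chi gs (lnorm (map atom (ew k n))))"
proof -
  have "(map xa (ew k n) :: (('g, 'k) elt \<times> nat list) list) = map atom_to_elt (map atom (ew k n))"
    by (simp add: xa_eq_atom_to_elt)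
  then have "ebr chi gs k n = ev chi gs (lnorm (map atom_to_elt (map atom (ew k n))))"
    by (simp only: ebr_def)
  also have "\<dots> = ev chi gs (map_btree atom_to_elt (lnorm (map atom (ew k n))))"
    by (simp add: map_btree_lnorm ew_ne)
  also have "\<dots> = to_elt (evP chi gs (lnorm (map atom (ew k n))))"
    using admissible_ew[OF assms] by (simp add: ev_map_to_elt leaves_lnorm ew_ne)
  finally show ?thesis .
qed

lemma leaves_ebr_word:
  "1 \<le> k \<Longrightarrow> (ebr chi gs k n, ew k n) # map (\<lambda>i. xa (2 * n - i)) [n + 1..<m + 1]
    = map atom_to_elt (ebr_word k m)"
  by (simp add: ebr_word_def ebr_eq_to_elt xa_eq_atom_to_elt)

lemma admissible_ebr_word:
  assumes "1 \<le> k" "m < 2 * n - k"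
  shows "admissible n (ebr_word k m)"
proof -
  have "evP chi gs (lnorm (map atom (ew k n))) \<in> ncpolys n"
    using admissible_ew[OF assms(1)] by (simp add: evP_ncpolys leaves_lnorm ew_ne)
  moreover have "set (ew k n) \<subseteq> {1..n}" using assms by (auto simp: ew_def)
  moreover have "set (map (\<lambda>i. 2 * n - i) [n + 1..<m + 1]) \<subseteq> {1..n}" using assms by auto
  then have "admissible n (map atom (map (\<lambda>i. 2 * n - i) [n + 1..<m + 1]))"
    by (rule admissible_atoms)
  ultimately show ?thesis
    unfolding ebr_word_def by (simp add: admissible_def)
qed

lemma nth_ebr_word:
  assumes "j < m - n"
  shows "ebr_word k m ! Suc j = atom (n - 1 - j)"
proof -
  have "[n + 1..<m + 1] ! j = n + 1 + j" using assms by (simp del: upt_Suc)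
  moreover have "2 * n - (n + 1 + j) = n - 1 - j" by simp
  ultimately show ?thesis using assms by (simp add: ebr_word_def del: upt_Suc)
qed

lemma far_commuting_ebr_word:
  assumes k: "1 \<le> k" "k < n" and m: "n < m" "m < 2 * n - k"
  shows "far_commuting (ebr_word k m)"
  unfolding far_commuting_def
proof (intro allI impI)
  fix i j assume ij: "i + 1 < j \<and> j < length (ebr_word k m)"
  then obtain j' where j': "j = Suc j'" "j' < m - n" using m by (cases j) (auto simp: ebr_word_def)
  define b where "b = n - 1 - j'"
  have b: "k < b" "b \<le> n - 1" using j' m by (auto simp: b_def)
  show "evP chi gs (Nd (Lf (ebr_word k m ! i)) (Lf (ebr_word k m ! j))) \<in> rel_ideal"
  proof (cases i)
    case 0
    have "ew k n ! (b - k) = b" using b ij 0 j' by (auto simp: nth_ew b_def)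
    moreover have "0 < b - k" "b - k + 1 < length (ew k n)"
      using b ij 0 j' by (auto simp: length_ew b_def)
    ultimately have "evP chi gs (Nd (lnorm (map atom (ew k n))) (Lf (atom b))) \<in> rel_ideal"
      using serre_chain_commutes[OF serre_chain_ew[OF k], of "b - k"] by simp
    moreover have "ebr_word k m ! 0 = (evP chi gs (lnorm (map atom (ew k n))), ew k n)"
      by (simp add: ebr_word_def)
    ultimately show ?thesis using 0 j' by (simp add: nth_ebr_word b_def deg_lnorm ew_ne)
  next
    case (Suc i')
    have i': "i' < m - n" "i' + 1 < j'" using ij Suc j' by auto
    have "unlinked b (n - 1 - i')" using b i' by (intro unlinked_distant) (auto simp: b_def)
    then have "unlinked (n - 1 - i') b" by (rule unlinked_sym)
    then show ?thesis using Suc i' j' by (simp add: unlinked_def nth_ebr_word b_def)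
  qed
qed

end

theorem lemma6p4:
  fixes chi :: "nat \<Rightarrow> 'g::ab_group_add \<Rightarrow> 'k::field"
    and gs :: "nat \<Rightarrow> 'g" and q :: 'k and n k m :: nat
  assumes "n \<ge> 3" and "q \<noteq> -1" and "so_params chi gs n q"
    and "1 \<le> k" and "k < n" and "n < m" and "m < 2 * n - k"
  shows "\<forall>t1 t2. leaves t1 = (ebr chi gs k n, ew k n) # map (\<lambda>i. xa (2 * n - i)) [n+1..<m+1]
             \<and> leaves t2 = (ebr chi gs k n, ew k n) # map (\<lambda>i. xa (2 * n - i)) [n+1..<m+1]
             \<longrightarrow> eqU chi gs n (ev chi gs t1) (ev chi gs t2)"
proof (intro allI impI)
  interpret so_setting chi gs n q using assms(1-3) by unfold_locales
  fix t1 t2 :: "(('g, 'k) elt \<times> nat list) btree"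
  assume "leaves t1 = (ebr chi gs k n, ew k n) # map (\<lambda>i. xa (2 * n - i)) [n+1..<m+1]
      \<and> leaves t2 = (ebr chi gs k n, ew k n) # map (\<lambda>i. xa (2 * n - i)) [n+1..<m+1]"
  then have "leaves t1 = map atom_to_elt (ebr_word k m)"
    and "leaves t2 = map atom_to_elt (ebr_word k m)"
    by (simp_all only: leaves_ebr_word[OF assms(4)])
  with admissible_ebr_word[OF assms(4,7)] far_commuting_ebr_word[OF assms(4-7)]
  show "eqU chi gs n (ev chi gs t1) (ev chi gs t2)"
    by (rule eqU_bracketings)
qed

end
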